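(* Let $\mathcal D$ be a finite nonempty set. Let $\Psi:\mathcal H^{\mathcal D}_{P,R}\to(\mathcal H^{\mathcal D}_{P,R})^{*g}$ be the unique Hopf algebra morphism such that $\Psi\circ B_d^+=\gamma_d^{*g}\circ\Psi$ for all $d\in\mathcal D$ (such a morphism exists and is unique). Then $\Psi$ is an isomorphism of graded Hopf algebras.
   Context: $\mathcal H^{\mathcal D}_{P,R}$ is the Hopf algebra of planar rooted trees decorated by $\mathcal D$: the free associative unital $\mathbb Q$-algebra on the set of planar rooted trees (finite trees with a root, embedded in the plane, edges oriented away from the root) whose vertices carry decorations in $\mathcal D$; the basis is the set of planar forests $t_1\cdots t_n$ ($1$ = empty forest). Coproduct: $\Delta(F)=\sum_cP^c(F)\otimes R^c(F)$ over all cuts $c$ of $F=t_1\cdots t_n$, where a cut is a tuple $(c_i)$, each $c_i$ being either the empty cut of $t_i$ ($P=1,R=t_i$), the total cut ($P=t_i,R=1$), or an admissible cut, i.e. a nonempty set of edges of $t_i$ such that every oriented path meets at most one of them, with $R^{c_i}(t_i)$ the component of the root and $P^{c_i}(t_i)$ the left-to-right planar forest of the other components; $P^c(F)=\prod_iP^{c_i}(t_i)$, $R^c(F)=\prod_iR^{c_i}(t_i)$. Counit: $\varepsilon(F)=0$ for $F\ne1$. It is graded by weight (number of vertices), with finite-dimensional components. $B_d^+$ grafts a forest $t_1\cdots t_n$ (in this order) on a new root decorated by $d$, and $\bullet_d=B_d^+(1)$. For a graded Hopf algebra $A=\bigoplus_nA_n$ with $A_0$ one-dimensional and finite-dimensional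 $A_n$, the graded dual $A^{*g}=\bigoplus_nA_n^*$ is the graded Hopf algebra with $(fg)(x)=(f\otimes g)(\Delta(x))$, unit $\varepsilon$, $\Delta(f)(x\otimes y)=f(xy)$, counit $f\mapsto f(1)$, antipode $f\mapsto f\circ S$, $(A^{*g})_n=A_n^*$. Define the linear map $\gamma_d:\mathcal H^{\mathcal D}_{P,R}\to\mathcal H^{\mathcal D}_{P,R}$ by $\gamma_d(1)=0$, $\gamma_d(t_1\cdots t_n)=t_1\cdots t_{n-1}$ if $t_n=\bullet_d$ and $0$ otherwise, and $\gamma_d^{*g}(f)=f\circ\gamma_d$ its transpose on the graded dual. *)

theory Defs
  imports Complex_Main
begin

datatype 'd ptree = Node 'd "'d ptree list"

type_synonym 'd forest = "'d ptree list"

definition forest_on :: "'d set \<Rightarrow> 'd forest \<Rightarrow> bool" where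
  "forest_on D F \<longleftrightarrow> (\<forall>t\<in>set F. set_ptree t \<subseteq> D)"

fun tweight :: "'d ptree \<Rightarrow> nat" where
  "tweight (Node d ts) = Suc (sum_list (map tweight ts))"

definition fweight :: "'d forest \<Rightarrow> nat" where
  "fweight F = sum_list (map tweight F)"

text \<open>Non-total cuts (empty cut or admissible cut) of a tree, each cut listed once,
  returned as pair (pruned planar forest P, root component R).  For the children
  of a vertex, in left-to-right order, either the edge to the child is cut (the
  whole child subtree goes to P) or it is not, and then an empty/admissible cut of
  the child subtree is chosen.\<close>
primrec cuts :: "'d ptree \<Rightarrow> ('d forest \<times> 'd ptree) list"
  and cuts_ch :: "'d ptree list \<Rightarrow> ('d forest \<times> 'd ptree list) list" where
  "cuts (Node d ts) = map (\<lambda>(P, rs). (P, Node d rs)) (cuts_ch ts)"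
| "cuts_ch [] = [([], [])]"
| "cuts_ch (t # ts) =
     concat (map (\<lambda>(P1, rs1). map (\<lambda>(P2, rs2). (P1 @ P2, rs1 @ rs2)) (cuts_ch ts))
       (([t], []) # map (\<lambda>(P, r). (P, [r])) (cuts t)))"

text \<open>All cuts c of a forest, as list of pairs (P^c(F), R^c(F)) (total cut included).\<close>
fun fcuts :: "'d forest \<Rightarrow> ('d forest \<times> 'd forest) list" where
  "fcuts [] = [([], [])]"
| "fcuts (t # ts) =
     concat (map (\<lambda>(P1, R1). map (\<lambda>(P2, R2). (P1 @ P2, R1 @ R2)) (fcuts ts))
       (([t], []) # map (\<lambda>(P, r). (P, [r])) (cuts t)))"

text \<open>Vectors of H are coordinate functions on the basis of planar forests
  (finitely supported, supported on D-decorated forests).\<close>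
type_synonym 'd hvec = "'d forest \<Rightarrow> rat"
type_synonym 'd hvec2 = "'d forest \<times> 'd forest \<Rightarrow> rat"

definition Hc :: "'d set \<Rightarrow> 'd hvec set" where
  "Hc D = {x. finite {F. x F \<noteq> 0} \<and> (\<forall>F. x F \<noteq> 0 \<longrightarrow> forest_on D F)}"

definition basis :: "'d forest \<Rightarrow> 'd hvec" where
  "basis F = (\<lambda>G. if G = F then 1 else 0)"

definition hmult :: "'d hvec \<Rightarrow> 'd hvec \<Rightarrow> 'd hvec" where
  "hmult x y = (\<lambda>F. \<Sum>i\<le>length F. x (take i F) * y (drop i F))"

definition hunit :: "'d hvec" where
  "hunit = basis []"

text \<open>Coproduct, with values in H \<otimes> H = functions on pairs of forests.\<close>
definition hcoprod :: "'d hvec \<Rightarrow> 'd hvec2" where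
  "hcoprod x = (\<lambda>(A, B). \<Sum>F | x F \<noteq> 0. x F * of_nat (count_list (fcuts F) (A, B)))"

definition hcounit :: "'d hvec \<Rightarrow> rat" where
  "hcounit x = x []"

definition Bplus :: "'d \<Rightarrow> 'd hvec \<Rightarrow> 'd hvec" where
  "Bplus d x = (\<lambda>F. case F of [Node d' ts] \<Rightarrow> (if d' = d then x ts else 0) | _ \<Rightarrow> 0)"

text \<open>An element of the graded dual (direct sum of the duals of the homogeneous
  components) is given by its values on the basis of planar forests; it vanishes on
  all components of large enough weight.  Pairing with x : f(x) = sum_F f F * x F.\<close>
definition Dc :: "'d set \<Rightarrow> 'd hvec set" where
  "Dc D = {f. (\<forall>F. f F \<noteq> 0 \<longrightarrow> forest_on D F) \<and> (\<exists>N. \<forall>F. f F \<noteq> 0 \<longrightarrow> fweight F \<le> N)}"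

text \<open>(fg)(F) = (f \<otimes> g)(Delta F).\<close>
definition dmult :: "'d hvec \<Rightarrow> 'd hvec \<Rightarrow> 'd hvec" where
  "dmult f g = (\<lambda>F. sum_list (map (\<lambda>(P, R). f P * g R) (fcuts F)))"

text \<open>Unit of the dual = counit of H.\<close>
definition dunit :: "'d hvec" where
  "dunit = basis []"

text \<open>Delta(f)(F1 \<otimes> F2) = f(F1 F2).\<close>
definition dcoprod :: "'d hvec \<Rightarrow> 'd hvec2" where
  "dcoprod f = (\<lambda>(A, B). f (A @ B))"

definition dcounit :: "'d hvec \<Rightarrow> rat" where
  "dcounit f = f []"

text \<open>Transpose of gamma_d: (gamma_d^{*g} f)(F) = f(gamma_d F).\<close>
definition gamma_dual :: "'d \<Rightarrow> 'd hvec \<Rightarrow> 'd hvec" where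
  "gamma_dual d f = (\<lambda>F. if F \<noteq> [] \<and> last F = Node d [] then f (butlast F) else 0)"

text \<open>Tensor square of a linear map H \<rightarrow> H^{*g}, on H \<otimes> H.\<close>
definition tensmap :: "('d hvec \<Rightarrow> 'd hvec) \<Rightarrow> 'd hvec2 \<Rightarrow> 'd hvec2" where
  "tensmap \<Psi> z = (\<lambda>(A, B). \<Sum>(P, R) | z (P, R) \<noteq> 0.
                        z (P, R) * \<Psi> (basis P) A * \<Psi> (basis R) B)"

definition hopf_morph :: "'d set \<Rightarrow> ('d hvec \<Rightarrow> 'd hvec) \<Rightarrow> bool" where
  "hopf_morph D \<Psi> \<longleftrightarrow>
     (\<forall>x\<in>Hc D. \<Psi> x \<in> Dc D) \<and>
     (\<forall>x\<in>Hc D. \<forall>y\<in>Hc D. \<Psi> (\<lambda>F. x F + y F) = (\<lambda>F. \<Psi> x F + \<Psi> y F)) \<and>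
     (\<forall>x\<in>Hc D. \<forall>c. \<Psi> (\<lambda>F. c * x F) = (\<lambda>F. c * \<Psi> x F)) \<and>
     (\<forall>x\<in>Hc D. \<forall>y\<in>Hc D. \<Psi> (hmult x y) = dmult (\<Psi> x) (\<Psi> y)) \<and>
     \<Psi> hunit = dunit \<and>
     (\<forall>x\<in>Hc D. dcoprod (\<Psi> x) = tensmap \<Psi> (hcoprod x)) \<and>
     (\<forall>x\<in>Hc D. dcounit (\<Psi> x) = hcounit x)"

definition intertwines :: "'d set \<Rightarrow> ('d hvec \<Rightarrow> 'd hvec) \<Rightarrow> bool" where
  "intertwines D \<Psi> \<longleftrightarrow> (\<forall>d\<in>D. \<forall>x\<in>Hc D. \<Psi> (Bplus d x) = gamma_dual d (\<Psi> x))"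

definition graded_map :: "'d set \<Rightarrow> ('d hvec \<Rightarrow> 'd hvec) \<Rightarrow> bool" where
  "graded_map D \<Psi> \<longleftrightarrow> (\<forall>n. \<forall>x\<in>Hc D. (\<forall>F. x F \<noteq> 0 \<longrightarrow> fweight F = n) \<longrightarrow>
                          (\<forall>F. \<Psi> x F \<noteq> 0 \<longrightarrow> fweight F = n))"

definition graded_hopf_iso :: "'d set \<Rightarrow> ('d hvec \<Rightarrow> 'd hvec) \<Rightarrow> bool" where
  "graded_hopf_iso D \<Psi> \<longleftrightarrow> hopf_morph D \<Psi> \<and> graded_map D \<Psi> \<and> bij_betw \<Psi> (Hc D) (Dc D)"

end

theory Submission
  imports Defs
begin

(* Planar forests are generated from the empty forest by the B_d^+ and concatenation, so the two
   requirements on \<Psi> force the recursion \<Psi>(B_d^+(K) F) = \<gamma>_d^*(\<Psi> K) \<Psi>(F). This proves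
   uniqueness, and taking the recursion as the definition of the coefficients of \<Psi> gives a Hopf
   algebra morphism because the cut coproduct is coassociative and multiplicative.
   \<Psi> is triangular in the basis of forests: for the weight- and decoration-preserving involution
   \<iota>(F B_d^+(K)) = \<iota>(K) B_d^+(\<iota> F) (leading_forest), the coefficient of \<iota>(F) in \<Psi>(F) is nonzero and
   every other forest occurring in \<Psi>(F) is smaller than \<iota>(F) in a suitable strict order. As D is
   finite, there are finitely many forests of each weight, and back substitution inverts \<Psi>. *)

section \<open>Linear maps given by kernels\<close>

text \<open>Only meaningful for finitely supported \<open>x\<close>: over an infinite support the sum is \<open>0\<close>.\<close>

definition lin_ext :: "('a \<Rightarrow> 'b \<Rightarrow> 'c::semiring_0) \<Rightarrow> ('a \<Rightarrow> 'c) \<Rightarrow> 'b \<Rightarrow> 'c" where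
  "lin_ext M x = (\<lambda>b. \<Sum>a | x a \<noteq> 0. x a * M a b)"

lemma lin_ext_eq_sum:
  "finite S \<Longrightarrow> {a. x a \<noteq> 0} \<subseteq> S \<Longrightarrow> lin_ext M x b = (\<Sum>a\<in>S. x a * M a b)"
  unfolding lin_ext_def by (rule sum.mono_neutral_left) auto

lemma lin_ext_nonzero:
  assumes "lin_ext M x b \<noteq> 0"
  obtains a where "x a \<noteq> 0" and "M a b \<noteq> 0"
proof -
  obtain a where "a \<in> {a. x a \<noteq> 0}" and "x a * M a b \<noteq> 0"
    using assms unfolding lin_ext_def by (rule sum.not_neutral_contains_not_neutral)
  then show thesis
    using that by (metis mem_Collect_eq mult_zero_right)
qed

lemma support_lin_ext_subset:
  "{b. lin_ext M x b \<noteq> 0} \<subseteq> (\<Union>a\<in>{a. x a \<noteq> 0}. {b. M a b \<noteq> 0})"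
proof
  fix b
  assume "b \<in> {b. lin_ext M x b \<noteq> 0}"
  then obtain a where "x a \<noteq> 0" and "M a b \<noteq> 0"
    by (auto elim: lin_ext_nonzero)
  then show "b \<in> (\<Union>a\<in>{a. x a \<noteq> 0}. {b. M a b \<noteq> 0})"
    by blast
qed

lemma support_lincomb_subset:
  "{a. (\<Sum>i\<in>I. c i * y i a) \<noteq> (0 :: 'c::semiring_0)} \<subseteq> (\<Union>i\<in>I. {a. y i a \<noteq> 0})"
proof
  fix a
  assume "a \<in> {a. (\<Sum>i\<in>I. c i * y i a) \<noteq> 0}"
  then obtain i where "i \<in> I" and "c i * y i a \<noteq> 0"
    by (auto elim: sum.not_neutral_contains_not_neutral)
  then show "a \<in> (\<Union>i\<in>I. {a. y i a \<noteq> 0})"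
    by (metis (mono_tags) UN_iff mem_Collect_eq mult_zero_right)
qed

lemma finite_support_lincomb:
  "finite I \<Longrightarrow> (\<And>i. i \<in> I \<Longrightarrow> finite {a. y i a \<noteq> 0}) \<Longrightarrow>
     finite {a. (\<Sum>i\<in>I. c i * y i a) \<noteq> (0 :: 'c::semiring_0)}"
  by (rule finite_subset[OF support_lincomb_subset]) simp

lemma lincomb_delta:
  "finite S \<Longrightarrow> (\<Sum>a\<in>S. c a * (if b = a then 1 else 0)) = (if b \<in> S then c b else (0 :: 'c::semiring_1))"
  by (simp add: if_distrib[of "\<lambda>t. _ * t"] sum.delta' cong: if_cong)

lemma lin_ext_lincomb:
  fixes y :: "'i \<Rightarrow> 'a \<Rightarrow> 'c::comm_semiring_0"
  assumes I: "finite I" and y: "\<And>i. i \<in> I \<Longrightarrow> finite {a. y i a \<noteq> 0}"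
  shows "lin_ext M (\<lambda>a. \<Sum>i\<in>I. c i * y i a) b = (\<Sum>i\<in>I. c i * lin_ext M (y i) b)"
proof -
  define S where "S = (\<Union>i\<in>I. {a. y i a \<noteq> 0})"
  have S: "finite S"
    using I y by (simp add: S_def)
  have "lin_ext M (\<lambda>a. \<Sum>i\<in>I. c i * y i a) b = (\<Sum>a\<in>S. (\<Sum>i\<in>I. c i * y i a) * M a b)"
    unfolding S_def by (rule lin_ext_eq_sum[OF S[unfolded S_def] support_lincomb_subset])
  also have "\<dots> = (\<Sum>i\<in>I. c i * (\<Sum>a\<in>S. y i a * M a b))"
    by (simp add: sum_distrib_left sum_distrib_right sum.swap[of _ S] mult.assoc)
  also have "\<dots> = (\<Sum>i\<in>I. c i * lin_ext M (y i) b)"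
    by (intro sum.cong refl arg_cong[where f = "(*) _"] lin_ext_eq_sum[symmetric] S) (auto simp: S_def)
  finally show ?thesis .
qed

lemma lin_ext_add:
  fixes x y :: "'a \<Rightarrow> 'c::comm_semiring_1"
  shows "finite {a. x a \<noteq> 0} \<Longrightarrow> finite {a. y a \<noteq> 0} \<Longrightarrow>
     lin_ext M (\<lambda>a. x a + y a) = (\<lambda>b. lin_ext M x b + lin_ext M y b)"
  using lin_ext_lincomb[of "{True, False}" "\<lambda>i. if i then x else y" M "\<lambda>_. 1"] by auto

lemma lin_ext_scale:
  fixes x :: "'a \<Rightarrow> 'c::comm_semiring_0"
  shows "finite {a. x a \<noteq> 0} \<Longrightarrow> lin_ext M (\<lambda>a. c * x a) = (\<lambda>b. c * lin_ext M x b)"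
  using lin_ext_lincomb[of "{()}" "\<lambda>_. x" M "\<lambda>_. c"] by auto

lemma lin_ext_diff:
  fixes x y :: "'a \<Rightarrow> 'c::comm_ring_1"
  shows "finite {a. x a \<noteq> 0} \<Longrightarrow> finite {a. y a \<noteq> 0} \<Longrightarrow>
     lin_ext M (\<lambda>a. x a - y a) = (\<lambda>b. lin_ext M x b - lin_ext M y b)"
  using lin_ext_lincomb[of "{True, False}" "\<lambda>i. if i then x else y" M "\<lambda>i. if i then 1 else -1"] by auto

lemma lin_ext_delta:
  fixes M :: "'a \<Rightarrow> 'b \<Rightarrow> 'c::semiring_1"
  shows "lin_ext M (\<lambda>a'. if a' = a then 1 else 0) = M a"
  by (auto simp: lin_ext_def)

lemma lin_ext_comp:
  fixes M :: "'a \<Rightarrow> 'b \<Rightarrow> 'c::comm_semiring_0"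
  assumes x: "finite {a. x a \<noteq> 0}" and rows: "\<And>a. finite {b. M a b \<noteq> 0}"
  shows "lin_ext N (lin_ext M x) = lin_ext (\<lambda>a c. \<Sum>b | M a b \<noteq> 0. M a b * N b c) x"
proof
  fix c
  define S where "S = {a. x a \<noteq> 0}"
  define T where "T = (\<Union>a\<in>S. {b. M a b \<noteq> 0})"
  have T: "finite T"
    using x rows by (simp add: T_def S_def)
  have "lin_ext N (lin_ext M x) c = (\<Sum>b\<in>T. lin_ext M x b * N b c)"
    by (rule lin_ext_eq_sum[OF T]) (simp add: T_def S_def support_lin_ext_subset)
  also have "\<dots> = (\<Sum>b\<in>T. \<Sum>a\<in>S. x a * M a b * N b c)"
    by (simp add: lin_ext_def S_def sum_distrib_right)
  also have "\<dots> = (\<Sum>a\<in>S. x a * (\<Sum>b\<in>T. M a b * N b c))"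
    by (simp add: sum.swap[of _ T] sum_distrib_left mult.assoc)
  also have "\<dots> = (\<Sum>a\<in>S. x a * (\<Sum>b | M a b \<noteq> 0. M a b * N b c))"
    by (intro sum.cong refl arg_cong[where f = "(*) _"] sum.mono_neutral_right T) (auto simp: T_def)
  finally show "lin_ext N (lin_ext M x) c = lin_ext (\<lambda>a c. \<Sum>b | M a b \<noteq> 0. M a b * N b c) x c"
    by (simp add: lin_ext_def S_def)
qed

lemma wf_finite_strict_order:
  assumes "finite W" and irrefl: "\<And>b. \<not> lt b b"
    and trans: "\<And>b1 b2 b3. lt b1 b2 \<Longrightarrow> lt b2 b3 \<Longrightarrow> lt b1 b3"
  shows "wf {(b', b). b' \<in> W \<and> b \<in> W \<and> lt b' b}"
proof (rule finite_acyclic_wf)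
  let ?r = "{(b', b). b' \<in> W \<and> b \<in> W \<and> lt b' b}"
  show "finite ?r"
    by (rule finite_subset[of _ "W \<times> W"]) (use assms(1) in auto)
  have "trans ?r"
    using trans by (auto simp: trans_def)
  then show "acyclic ?r"
    using irrefl by (simp add: acyclic_def)
qed

locale triangular_kernel =
  fixes M :: "'a \<Rightarrow> 'b \<Rightarrow> 'c::field" and lead :: "'a \<Rightarrow> 'b" and lt :: "'b \<Rightarrow> 'b \<Rightarrow> bool"
  assumes lt_irrefl: "\<not> lt b b"
    and lt_trans: "lt b1 b2 \<Longrightarrow> lt b2 b3 \<Longrightarrow> lt b1 b3"
    and inj_lead: "inj lead"
    and kernel_below_lead: "M a b \<noteq> 0 \<Longrightarrow> b = lead a \<or> lt b (lead a)"
    and kernel_lead_nonzero: "M a (lead a) \<noteq> 0"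
begin

lemma lin_ext_eq_0_imp_eq_0:
  assumes fin: "finite {a. x a \<noteq> 0}" and zero: "lin_ext M x = (\<lambda>_. 0)"
  shows "x = (\<lambda>_. 0)"
proof (rule ccontr)
  define S where "S = {a. x a \<noteq> 0}"
  assume "x \<noteq> (\<lambda>_. 0)"
  then have ne: "lead ` S \<noteq> {}"
    by (auto simp: S_def)
  have wf: "wf {(b', b). b' \<in> lead ` S \<and> b \<in> lead ` S \<and> lt b b'}"
    using wf_finite_strict_order[of "lead ` S" "\<lambda>b' b. lt b b'"] fin lt_irrefl lt_trans
    unfolding S_def by blast
  obtain m where m: "m \<in> lead ` S"
    and m_min: "\<And>b. (b, m) \<in> {(b', b). b' \<in> lead ` S \<and> b \<in> lead ` S \<and> lt b b'} \<Longrightarrow> b \<notin> lead ` S"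
    using wfE_min'[OF wf ne] by blast
  have m_max: "\<not> lt m b" if "b \<in> lead ` S" for b
    using m_min[of b] m that by auto
  from m obtain a0 where a0: "a0 \<in> S" "m = lead a0"
    by blast
  have others: "M a m = 0" if "a \<in> S" "a \<noteq> a0" for a
    using kernel_below_lead[of a m] m_max[of "lead a"] inj_lead that a0
    by (auto dest: injD)
  have "lin_ext M x m = (\<Sum>a\<in>S. x a * M a m)"
    by (rule lin_ext_eq_sum) (simp_all add: S_def fin)
  also have "\<dots> = (\<Sum>a\<in>{a0}. x a * M a m)"
    by (rule sum.mono_neutral_right) (use fin a0 others in \<open>auto simp: S_def\<close>)
  also have "\<dots> \<noteq> 0"
    using a0 kernel_lead_nonzero by (simp add: S_def)
  finally show False
    using zero by simp
qed

lemma inj_on_lin_ext: "inj_on (lin_ext M) {x. finite {a. x a \<noteq> 0}}"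
proof (rule inj_onI)
  fix x y
  assume x: "x \<in> {x. finite {a. x a \<noteq> 0}}" and y: "y \<in> {x. finite {a. x a \<noteq> 0}}"
    and eq: "lin_ext M x = lin_ext M y"
  have "finite {a. x a - y a \<noteq> 0}"
    by (rule finite_subset[of _ "{a. x a \<noteq> 0} \<union> {a. y a \<noteq> 0}"]) (use x y in auto)
  moreover have "lin_ext M (\<lambda>a. x a - y a) = (\<lambda>_. 0)"
    using x y eq by (simp add: lin_ext_diff)
  ultimately have "(\<lambda>a. x a - y a) = (\<lambda>_. 0)"
    by (rule lin_ext_eq_0_imp_eq_0)
  then show "x = y"
    by (simp add: fun_eq_iff)
qed


lemma lin_ext_back_substitution:
  assumes B: "finite B" "lead a \<notin> B"
    and X: "\<And>b. b \<in> B \<Longrightarrow> finite {a. X b a \<noteq> 0} \<and> lin_ext M (X b) = (\<lambda>c. if c = b then 1 else 0)"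
    and row: "\<And>c. M a c \<noteq> 0 \<Longrightarrow> c = lead a \<or> c \<in> B"
  shows "lin_ext M (\<lambda>a'. inverse (M a (lead a)) * ((if a' = a then 1 else 0) - (\<Sum>b\<in>B. M a b * X b a')))
      = (\<lambda>c. if c = lead a then 1 else 0)"
proof
  fix c
  have delta: "finite {a'. (if a' = a then 1 else 0 :: 'c) \<noteq> 0}"
    by simp
  have fin: "finite {a'. (\<Sum>b\<in>B. M a b * X b a') \<noteq> 0}"
    by (rule finite_support_lincomb) (use B X in auto)
  have diff: "finite {a'. (if a' = a then 1 else 0) - (\<Sum>b\<in>B. M a b * X b a') \<noteq> 0}"
    by (rule finite_subset[OF _ finite_UnI[OF delta fin]]) auto
  have "lin_ext M (\<lambda>a'. inverse (M a (lead a)) * ((if a' = a then 1 else 0) - (\<Sum>b\<in>B. M a b * X b a'))) c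
      = inverse (M a (lead a)) * (M a c - lin_ext M (\<lambda>a'. \<Sum>b\<in>B. M a b * X b a') c)"
    by (simp only: lin_ext_scale[OF diff] lin_ext_diff[OF delta fin] lin_ext_delta)
  also have "\<dots> = inverse (M a (lead a)) * (M a c - (\<Sum>b\<in>B. M a b * (if c = b then 1 else 0)))"
    by (subst lin_ext_lincomb) (use B X in auto)
  also have "\<dots> = inverse (M a (lead a)) * (M a c - (if c \<in> B then M a c else 0))"
    by (simp only: lincomb_delta[OF B(1)])
  also have "\<dots> = (if c = lead a then 1 else 0)"
    using row[of c] kernel_lead_nonzero[of a] B(2) by auto
  finally show "lin_ext M (\<lambda>a'. inverse (M a (lead a)) * ((if a' = a then 1 else 0) - (\<Sum>b\<in>B. M a b * X b a'))) c
      = (if c = lead a then 1 else 0)" .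
qed

lemma lin_ext_onto_delta:
  assumes W: "finite W" and lead_onto: "\<And>b. b \<in> W \<Longrightarrow> \<exists>a\<in>A. lead a = b"
    and closed: "\<And>a b. a \<in> A \<Longrightarrow> M a b \<noteq> 0 \<Longrightarrow> b \<in> W"
    and "b \<in> W"
  shows "\<exists>x. finite {a. x a \<noteq> 0} \<and> {a. x a \<noteq> 0} \<subseteq> A \<and> lin_ext M x = (\<lambda>c. if c = b then 1 else 0)"
proof -
  have "wf {(b', b). b' \<in> W \<and> b \<in> W \<and> lt b' b}"
    using W lt_irrefl lt_trans by (rule wf_finite_strict_order)
  then show ?thesis
    using \<open>b \<in> W\<close>
  proof (induction b rule: wf_induct_rule)
    case (less b)
    define B where "B = {b' \<in> W. lt b' b}"
    have "\<forall>b'\<in>B. \<exists>x. finite {a. x a \<noteq> 0} \<and> {a. x a \<noteq> 0} \<subseteq> A \<and> lin_ext M x = (\<lambda>c. if c = b' then 1 else 0)"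
      using less by (auto simp: B_def)
    then obtain X where X: "\<And>b'. b' \<in> B \<Longrightarrow> finite {a. X b' a \<noteq> 0} \<and> {a. X b' a \<noteq> 0} \<subseteq> A
        \<and> lin_ext M (X b') = (\<lambda>c. if c = b' then 1 else 0)"
      by metis
    obtain a where a: "a \<in> A" "lead a = b"
      using lead_onto less.prems by blast
    have B: "finite B" "lead a \<notin> B"
      using W lt_irrefl a(2) by (auto simp: B_def)
    have row: "c = lead a \<or> c \<in> B" if "M a c \<noteq> 0" for c
      using kernel_below_lead[OF that] closed[OF a(1) that] a(2) by (auto simp: B_def)
    have X': "finite {a. X b' a \<noteq> 0} \<and> lin_ext M (X b') = (\<lambda>c. if c = b' then 1 else 0)"
      if "b' \<in> B" for b'
      using X[OF that] by blast
    let ?x = "\<lambda>a'. inverse (M a (lead a)) * ((if a' = a then 1 else 0) - (\<Sum>b\<in>B. M a b * X b a'))"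
    have sub: "{a'. ?x a' \<noteq> 0} \<subseteq> insert a (\<Union>b\<in>B. {a'. X b a' \<noteq> 0})"
      using support_lincomb_subset[of "M a" X B] by auto
    have "finite {a'. ?x a' \<noteq> 0}"
      by (rule finite_subset[OF sub]) (use B(1) X in auto)
    moreover have "{a'. ?x a' \<noteq> 0} \<subseteq> A"
      by (rule subset_trans[OF sub]) (use a(1) X in auto)
    moreover have "lin_ext M ?x = (\<lambda>c. if c = b then 1 else 0)"
      using lin_ext_back_substitution[OF B X' row] a(2) by simp
    ultimately show ?case
      by (intro exI[of _ ?x] conjI)
  qed
qed

lemma lin_ext_onto:
  assumes W: "finite W" and lead_onto: "\<And>b. b \<in> W \<Longrightarrow> \<exists>a\<in>A. lead a = b"
    and closed: "\<And>a b. a \<in> A \<Longrightarrow> M a b \<noteq> 0 \<Longrightarrow> b \<in> W"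
    and f: "{b. f b \<noteq> 0} \<subseteq> W"
  shows "\<exists>x. finite {a. x a \<noteq> 0} \<and> {a. x a \<noteq> 0} \<subseteq> A \<and> lin_ext M x = f"
proof -
  define S where "S = {b. f b \<noteq> 0}"
  have S: "finite S"
    unfolding S_def using f W by (rule finite_subset)
  have "\<forall>b\<in>S. \<exists>x. finite {a. x a \<noteq> 0} \<and> {a. x a \<noteq> 0} \<subseteq> A \<and> lin_ext M x = (\<lambda>c. if c = b then 1 else 0)"
    using lin_ext_onto_delta[OF W lead_onto closed] f by (auto simp: S_def)
  then obtain X where X: "\<And>b. b \<in> S \<Longrightarrow> finite {a. X b a \<noteq> 0} \<and> {a. X b a \<noteq> 0} \<subseteq> A
      \<and> lin_ext M (X b) = (\<lambda>c. if c = b then 1 else 0)"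
    by metis
  define x where "x = (\<lambda>a. \<Sum>b\<in>S. f b * X b a)"
  have "lin_ext M x c = f c" for c
    using S X by (simp add: x_def lin_ext_lincomb lincomb_delta) (auto simp: S_def)
  moreover have "finite {a. x a \<noteq> 0}"
    unfolding x_def by (rule finite_support_lincomb) (use S X in auto)
  moreover have "{a. x a \<noteq> 0} \<subseteq> A"
    unfolding x_def using support_lincomb_subset X by fast
  ultimately show ?thesis
    by blast
qed

end

section \<open>Forests\<close>

definition forest_decs :: "'d forest \<Rightarrow> 'd set" where
  "forest_decs F = (\<Union>t\<in>set F. set_ptree t)"

lemma forest_decs_simps [simp]:
  "forest_decs [] = {}"
  "forest_decs (t # F) = set_ptree t \<union> forest_decs F"
  "forest_decs (A @ B) = forest_decs A \<union> forest_decs B"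
  by (auto simp: forest_decs_def)

lemma set_ptree_Node [simp]: "set_ptree (Node d K) = insert d (forest_decs K)"
  by (auto simp: forest_decs_def)

lemma forest_on_iff_decs: "forest_on D F \<longleftrightarrow> forest_decs F \<subseteq> D"
  by (auto simp: forest_on_def forest_decs_def)

lemma fweight_simps [simp]:
  "fweight [] = 0"
  "fweight (t # F) = tweight t + fweight F"
  "fweight (A @ B) = fweight A + fweight B"
  by (auto simp: fweight_def)

lemma tweight_Node [simp]: "tweight (Node d K) = Suc (fweight K)"
  by (simp add: fweight_def)

declare tweight.simps [simp del] ptree.set [simp del]

lemma forest_induct [case_names Nil Cons]:
  assumes "P []" and "\<And>d K F. P K \<Longrightarrow> P F \<Longrightarrow> P (Node d K # F)"
  shows "P F"
proof (induction "fweight F" arbitrary: F rule: less_induct)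
  case less
  show ?case
  proof (cases F)
    case (Cons t F')
    then obtain d K where "F = Node d K # F'"
      by (cases t) auto
    then show ?thesis
      using less assms(2) by simp
  qed (simp add: assms(1))
qed

lemma forest_rev_induct [case_names Nil snoc]:
  assumes "P []" and "\<And>F d K. P F \<Longrightarrow> P K \<Longrightarrow> P (F @ [Node d K])"
  shows "P F"
proof (induction "fweight F" arbitrary: F rule: less_induct)
  case less
  show ?case
  proof (cases F rule: rev_cases)
    case (snoc F' t)
    then obtain d K where "F = F' @ [Node d K]"
      by (cases t) auto
    then show ?thesis
      using less assms(2) by simp
  qed (simp add: assms(1))
qed

lemma length_le_fweight: "length F \<le> fweight F"
  by (induction F rule: forest_induct) auto

lemma finite_bounded_forests:
  assumes "finite D"
  shows "finite {F. forest_on D F \<and> fweight F \<le> N}"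
proof (induction N)
  case 0
  have "F = []" if "fweight F \<le> 0" for F :: "'d forest"
    using length_le_fweight[of F] that by simp
  then show ?case
    by (auto intro: finite_subset[of _ "{[]}"])
next
  case (Suc N)
  let ?T = "(\<lambda>(d, K). Node d K) ` (D \<times> {K. forest_on D K \<and> fweight K \<le> N})"
  have "{F. forest_on D F \<and> fweight F \<le> Suc N} \<subseteq> {F. set F \<subseteq> ?T \<and> length F \<le> Suc N}"
  proof safe
    fix F t
    assume F: "forest_on D F" "fweight F \<le> Suc N" and t: "t \<in> set F"
    obtain d K where t_eq: "t = Node d K"
      by (cases t)
    from t have "tweight t \<le> fweight F"
      by (induction F) auto
    with F(2) have "fweight K \<le> N"
      by (simp add: t_eq)
    moreover have "set_ptree t \<subseteq> D"
      using F(1) t by (auto simp: forest_on_def)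
    then have "d \<in> D" and "forest_on D K"
      by (simp_all add: t_eq forest_on_iff_decs)
    ultimately show "t \<in> ?T"
      by (auto simp: t_eq intro!: image_eqI[of _ _ "(d, K)"])
  next
    fix F :: "'d forest"
    assume "fweight F \<le> Suc N"
    then show "length F \<le> Suc N"
      using length_le_fweight order_trans by blast
  qed
  moreover have "finite ?T"
    using Suc assms by simp
  ultimately show ?case
    by (rule finite_subset[OF _ finite_lists_length_le])
qed

section \<open>Cuts\<close>

lemma cuts_ch_eq_fcuts: "cuts_ch ts = fcuts ts"
  by (induction ts) auto

definition cut_prod :: "('a list \<times> 'a list) list \<Rightarrow> ('a list \<times> 'a list) list \<Rightarrow> ('a list \<times> 'a list) list" where
  "cut_prod xs ys = concat (map (\<lambda>(P1, R1). map (\<lambda>(P2, R2). (P1 @ P2, R1 @ R2)) ys) xs)"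

lemma cut_prod_unit_left [simp]: "cut_prod [([], [])] ys = ys"
  by (simp add: cut_prod_def case_prod_beta)

lemma cut_prod_unit_right [simp]: "cut_prod xs [([], [])] = xs"
  by (induction xs) (auto simp: cut_prod_def)

lemma cut_prod_Nil [simp]: "cut_prod [] ys = []"
  by (simp add: cut_prod_def)

lemma cut_prod_Cons:
  "cut_prod (c # xs) ys = map (\<lambda>(P2, R2). (fst c @ P2, snd c @ R2)) ys @ cut_prod xs ys"
  by (simp add: cut_prod_def case_prod_beta)

lemma cut_prod_append: "cut_prod (xs @ xs') ys = cut_prod xs ys @ cut_prod xs' ys"
  by (simp add: cut_prod_def)

lemma cut_prod_map_prefix:
  "cut_prod (map (\<lambda>(P, R). (A @ P, B @ R)) xs) ys = map (\<lambda>(P, R). (A @ P, B @ R)) (cut_prod xs ys)"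
  by (induction xs) (auto simp: cut_prod_def)

lemma cut_prod_assoc: "cut_prod (cut_prod xs ys) zs = cut_prod xs (cut_prod ys zs)"
  by (induction xs) (auto simp: cut_prod_Cons cut_prod_append cut_prod_map_prefix)

lemma mem_cut_prod:
  "c \<in> set (cut_prod xs ys) \<longleftrightarrow>
     (\<exists>P1 R1 P2 R2. (P1, R1) \<in> set xs \<and> (P2, R2) \<in> set ys \<and> c = (P1 @ P2, R1 @ R2))"
  by (force simp: cut_prod_def)

lemma sum_list_cut_prod:
  "(\<Sum>c\<leftarrow>cut_prod xs ys. f c) = (\<Sum>c1\<leftarrow>xs. \<Sum>c2\<leftarrow>ys. f (fst c1 @ fst c2, snd c1 @ snd c2))"
  by (induction xs) (auto simp: cut_prod_Cons case_prod_beta o_def)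

lemma fcuts_Cons_tree_cuts:
  "fcuts (t # F) = cut_prod (([t], []) # map (\<lambda>(P, r). (P, [r])) (cuts t)) (fcuts F)"
  by (simp add: cut_prod_def)

declare fcuts.simps(2) [simp del]

lemma fcuts_Cons: "fcuts (t # F) = cut_prod (fcuts [t]) (fcuts F)"
  by (simp only: fcuts_Cons_tree_cuts fcuts.simps(1) cut_prod_unit_right)

lemma fcuts_single:
  "fcuts [Node d K] = ([Node d K], []) # map (\<lambda>(P, rs). (P, [Node d rs])) (fcuts K)"
  by (simp only: fcuts_Cons_tree_cuts fcuts.simps(1) cut_prod_unit_right)
    (simp add: cuts_ch_eq_fcuts o_def case_prod_beta)

lemma fcuts_append: "fcuts (A @ B) = cut_prod (fcuts A) (fcuts B)"
proof (induction A)
  case (Cons t A)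
  have "fcuts ((t # A) @ B) = cut_prod (fcuts [t]) (fcuts (A @ B))"
    by (simp only: append_Cons fcuts_Cons[of t "A @ B"])
  then show ?case
    using Cons.IH by (simp add: fcuts_Cons[of t A] cut_prod_assoc)
qed simp

lemma fcuts_weight_decs:
  "(P, R) \<in> set (fcuts G) \<Longrightarrow>
     fweight G = fweight P + fweight R \<and> forest_decs G = forest_decs P \<union> forest_decs R"
proof (induction G arbitrary: P R rule: forest_induct)
  case (Cons d K F)
  from Cons.prems obtain P1 R1 P2 R2 where cut: "(P1, R1) \<in> set (fcuts [Node d K])"
    "(P2, R2) \<in> set (fcuts F)" "P = P1 @ P2" "R = R1 @ R2"
    by (auto simp: fcuts_Cons[of _ F] mem_cut_prod)
  from cut(1) consider "P1 = [Node d K]" "R1 = []"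
    | rs where "(P1, rs) \<in> set (fcuts K)" "R1 = [Node d rs]"
    by (auto simp: fcuts_single)
  then have "tweight (Node d K) = fweight P1 + fweight R1 \<and>
      set_ptree (Node d K) = forest_decs P1 \<union> forest_decs R1"
  proof cases
    case (2 rs)
    then show ?thesis
      using Cons.IH(1)[OF 2(1)] by auto
  qed simp
  moreover have "fweight F = fweight P2 + fweight R2 \<and> forest_decs F = forest_decs P2 \<union> forest_decs R2"
    by (rule Cons.IH(2)[OF cut(2)])
  ultimately show ?case
    using cut(3,4) by auto
qed simp

definition cut_sum :: "('d forest \<Rightarrow> 'd forest \<Rightarrow> 'a::comm_monoid_add) \<Rightarrow> 'd forest \<Rightarrow> 'a" where
  "cut_sum f G = (\<Sum>c\<leftarrow>fcuts G. f (fst c) (snd c))"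

lemma cut_sum_Nil [simp]: "cut_sum f [] = f [] []"
  by (simp add: cut_sum_def)

lemma cut_sum_single:
  "cut_sum f [Node d K] = f [Node d K] [] + cut_sum (\<lambda>P rs. f P [Node d rs]) K"
  by (simp add: cut_sum_def fcuts_single o_def case_prod_beta)

lemma cut_sum_append:
  "cut_sum f (A @ B) = cut_sum (\<lambda>P1 R1. cut_sum (\<lambda>P2 R2. f (P1 @ P2) (R1 @ R2)) B) A"
  by (simp add: cut_sum_def fcuts_append sum_list_cut_prod case_prod_beta)

lemma cut_sum_Cons:
  "cut_sum f (t # F) = cut_sum (\<lambda>P1 R1. cut_sum (\<lambda>P2 R2. f (P1 @ P2) (R1 @ R2)) F) [t]"
  using cut_sum_append[of f "[t]" F] by simp

lemma cut_sum_cong: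
  "(\<And>P R. (P, R) \<in> set (fcuts G) \<Longrightarrow> f P R = g P R) \<Longrightarrow> cut_sum f G = cut_sum g G"
  unfolding cut_sum_def by (rule arg_cong[where f = sum_list], rule map_cong) auto

lemma sum_list_swap:
  "(\<Sum>x\<leftarrow>xs. \<Sum>y\<leftarrow>ys. f x y) = (\<Sum>y\<leftarrow>ys. \<Sum>x\<leftarrow>xs. f x y :: 'a::comm_monoid_add)"
  by (induction xs) (simp_all add: sum_list_addf)

lemma cut_sum_swap:
  "cut_sum (\<lambda>P R. cut_sum (f P R) B) A = cut_sum (\<lambda>P' R'. cut_sum (\<lambda>P R. f P R P' R') A) B"
  unfolding cut_sum_def by (rule sum_list_swap)

lemma cut_sum_swap4:
  "cut_sum (\<lambda>a1 a2. cut_sum (\<lambda>b1 b2. cut_sum (\<lambda>c1 c2. cut_sum (\<lambda>d1 d2.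
       f a1 a2 b1 b2 c1 c2 d1 d2) D) C) B) A
   = cut_sum (\<lambda>c1 c2. cut_sum (\<lambda>d1 d2. cut_sum (\<lambda>a1 a2. cut_sum (\<lambda>b1 b2.
       f a1 a2 b1 b2 c1 c2 d1 d2) B) A) D) C"
proof -
  have "cut_sum (\<lambda>a1 a2. cut_sum (\<lambda>b1 b2. cut_sum (\<lambda>c1 c2. cut_sum (\<lambda>d1 d2.
       f a1 a2 b1 b2 c1 c2 d1 d2) D) C) B) A
   = cut_sum (\<lambda>a1 a2. cut_sum (\<lambda>c1 c2. cut_sum (\<lambda>b1 b2. cut_sum (\<lambda>d1 d2.
       f a1 a2 b1 b2 c1 c2 d1 d2) D) B) C) A"
    by (intro cut_sum_cong cut_sum_swap)
  also have "\<dots> = cut_sum (\<lambda>c1 c2. cut_sum (\<lambda>a1 a2. cut_sum (\<lambda>b1 b2. cut_sum (\<lambda>d1 d2.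
       f a1 a2 b1 b2 c1 c2 d1 d2) D) B) A) C"
    by (rule cut_sum_swap)
  also have "\<dots> = cut_sum (\<lambda>c1 c2. cut_sum (\<lambda>a1 a2. cut_sum (\<lambda>d1 d2. cut_sum (\<lambda>b1 b2.
       f a1 a2 b1 b2 c1 c2 d1 d2) B) D) A) C"
    by (intro cut_sum_cong cut_sum_swap)
  also have "\<dots> = cut_sum (\<lambda>c1 c2. cut_sum (\<lambda>d1 d2. cut_sum (\<lambda>a1 a2. cut_sum (\<lambda>b1 b2.
       f a1 a2 b1 b2 c1 c2 d1 d2) B) A) D) C"
    by (intro cut_sum_cong cut_sum_swap)
  finally show ?thesis .
qed

lemma cut_sum_add: "cut_sum (\<lambda>P R. f P R + g P R) G = cut_sum f G + cut_sum g G"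
  by (simp add: cut_sum_def sum_list_addf)

lemma cut_sum_zero [simp]: "cut_sum (\<lambda>P R. 0) G = 0"
  by (simp add: cut_sum_def)

lemma cut_sum_mult_left: "(c :: 'a::semiring_0) * cut_sum f G = cut_sum (\<lambda>P R. c * f P R) G"
  by (simp add: cut_sum_def flip: sum_list_const_mult)

lemma cut_sum_mult_right: "cut_sum f G * (c :: 'a::semiring_0) = cut_sum (\<lambda>P R. f P R * c) G"
  by (simp add: cut_sum_def flip: sum_list_mult_const)

lemma cut_sum_mult:
  "cut_sum f G * cut_sum g H = cut_sum (\<lambda>P R. cut_sum (\<lambda>P' R'. f P R * g P' R' :: 'a::semiring_0) H) G"
  by (subst cut_sum_mult_right) (simp only: cut_sum_mult_left)

lemma cut_sum_sum: "cut_sum (\<lambda>P R. \<Sum>i\<in>I. f i P R) G = (\<Sum>i\<in>I. cut_sum (f i) G)"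
  by (simp add: cut_sum_def sum_list_sum_nth sum.swap[of _ I])

lemma cut_sum_eq_0_iff:
  "cut_sum f G = (0 :: 'a::canonically_ordered_monoid_add) \<longleftrightarrow> (\<forall>c\<in>set (fcuts G). f (fst c) (snd c) = 0)"
  by (simp add: cut_sum_def)

lemma cut_sum_nonzero_obtain:
  assumes "cut_sum f G \<noteq> (0 :: nat)"
  obtains P R where "(P, R) \<in> set (fcuts G)" and "f P R \<noteq> 0"
  using assms by (auto simp: cut_sum_eq_0_iff)

lemma cut_sum_nonzero_intro:
  "(P, R) \<in> set (fcuts G) \<Longrightarrow> f P R \<noteq> 0 \<Longrightarrow> cut_sum f G \<noteq> (0 :: nat)"
  unfolding cut_sum_eq_0_iff by (metis fst_conv snd_conv)

lemma cut_sum_empty_cut: "cut_sum (\<lambda>P R. if P = [] then f R else 0) G = f G"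
proof (induction G arbitrary: f rule: forest_induct)
  case (Cons d K F)
  have inner: "cut_sum (\<lambda>P2 R2. if P1 = [] \<and> P2 = [] then f (R1 @ R2) else 0) F
      = (if P1 = [] then f (R1 @ F) else 0)" for P1 R1
    using Cons.IH(2)[of "\<lambda>R2. f (R1 @ R2)"] by (cases "P1 = []") simp_all
  have "cut_sum (\<lambda>P R. if P = [] then f R else 0) (Node d K # F)
      = cut_sum (\<lambda>P1 R1. if P1 = [] then f (R1 @ F) else 0) [Node d K]"
    by (simp only: cut_sum_Cons[of _ _ F] append_is_Nil_conv inner)
  also have "\<dots> = f (Node d K # F)"
    by (simp add: cut_sum_single Cons.IH(1))
  finally show ?case .
qed simp

lemma cut_sum_total_cut: "cut_sum (\<lambda>P R. if R = [] then f P else 0) G = f G"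
proof (induction G arbitrary: f rule: forest_induct)
  case (Cons d K F)
  have inner: "cut_sum (\<lambda>P2 R2. if R1 = [] \<and> R2 = [] then f (P1 @ P2) else 0) F
      = (if R1 = [] then f (P1 @ F) else 0)" for P1 R1
    using Cons.IH(2)[of "\<lambda>P2. f (P1 @ P2)"] by (cases "R1 = []") simp_all
  have "cut_sum (\<lambda>P R. if R = [] then f P else 0) (Node d K # F)
      = cut_sum (\<lambda>P1 R1. if R1 = [] then f (P1 @ F) else 0) [Node d K]"
    by (simp only: cut_sum_Cons[of _ _ F] append_is_Nil_conv inner)
  also have "\<dots> = f (Node d K # F)"
    by (simp add: cut_sum_single)
  finally show ?case .
qed simp

lemma mem_fcuts_iff_cut_sum:
  "(P, R) \<in> set (fcuts G) \<longleftrightarrow> cut_sum (\<lambda>P' R'. if P' = P \<and> R' = R then 1 else 0) G \<noteq> (0 :: nat)"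
  by (auto simp: cut_sum_eq_0_iff intro!: bexI[of _ "(P, R)"])

lemma empty_cut_iff: "([], R) \<in> set (fcuts G) \<longleftrightarrow> R = G"
  using cut_sum_empty_cut[of "\<lambda>R'. if R' = R then 1 else 0 :: nat" G]
  by (simp add: mem_fcuts_iff_cut_sum if_if_eq_conj)

lemma total_cut_iff: "(P, []) \<in> set (fcuts G) \<longleftrightarrow> P = G"
  using cut_sum_total_cut[of "\<lambda>P'. if P' = P then 1 else 0 :: nat" G]
  by (simp add: mem_fcuts_iff_cut_sum if_if_eq_conj conj_commute)

lemma leaf_cut_mem: "(X, Y @ [Node d []]) \<in> set (fcuts (Y @ [Node d X]))"
  using empty_cut_iff[of Y Y] total_cut_iff[of X X]
  by (force simp: fcuts_append mem_cut_prod fcuts_single)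

lemma cut_sum_coassoc_append:
  fixes \<phi> :: "'d forest \<Rightarrow> 'd forest \<Rightarrow> 'd forest \<Rightarrow> 'a::comm_monoid_add"
  assumes A: "\<And>\<psi> :: 'd forest \<Rightarrow> 'd forest \<Rightarrow> 'd forest \<Rightarrow> 'a.
      cut_sum (\<lambda>P R. cut_sum (\<lambda>P1 P2. \<psi> P1 P2 R) P) A = cut_sum (\<lambda>Q1 Q2. cut_sum (\<lambda>P2 R. \<psi> Q1 P2 R) Q2) A"
    and B: "\<And>\<psi> :: 'd forest \<Rightarrow> 'd forest \<Rightarrow> 'd forest \<Rightarrow> 'a.
      cut_sum (\<lambda>P R. cut_sum (\<lambda>P1 P2. \<psi> P1 P2 R) P) B = cut_sum (\<lambda>Q1 Q2. cut_sum (\<lambda>P2 R. \<psi> Q1 P2 R) Q2) B"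
  shows "cut_sum (\<lambda>P R. cut_sum (\<lambda>P1 P2. \<phi> P1 P2 R) P) (A @ B)
      = cut_sum (\<lambda>Q1 Q2. cut_sum (\<lambda>P2 R. \<phi> Q1 P2 R) Q2) (A @ B)"
proof -
  have "cut_sum (\<lambda>P R. cut_sum (\<lambda>P1 P2. \<phi> P1 P2 R) P) (A @ B)
      = cut_sum (\<lambda>a1 r1. cut_sum (\<lambda>b1 r2. cut_sum (\<lambda>x1 x2.
          cut_sum (\<lambda>y1 y2. \<phi> (x1 @ y1) (x2 @ y2) (r1 @ r2)) b1) a1) B) A"
    by (simp only: cut_sum_append)
  also have "\<dots> = cut_sum (\<lambda>a1 r1. cut_sum (\<lambda>x1 x2. cut_sum (\<lambda>b1 r2.
          cut_sum (\<lambda>y1 y2. \<phi> (x1 @ y1) (x2 @ y2) (r1 @ r2)) b1) B) a1) A"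
    by (intro cut_sum_cong cut_sum_swap)
  also have "\<dots> = cut_sum (\<lambda>a1 r1. cut_sum (\<lambda>x1 x2. cut_sum (\<lambda>z1 z2.
          cut_sum (\<lambda>y2 r2. \<phi> (x1 @ z1) (x2 @ y2) (r1 @ r2)) z2) B) a1) A"
    by (simp only: B)
  also have "\<dots> = cut_sum (\<lambda>q1 q2. cut_sum (\<lambda>x2 r1. cut_sum (\<lambda>z1 z2.
          cut_sum (\<lambda>y2 r2. \<phi> (q1 @ z1) (x2 @ y2) (r1 @ r2)) z2) B) q2) A"
    by (rule A)
  also have "\<dots> = cut_sum (\<lambda>q1 q2. cut_sum (\<lambda>z1 z2. cut_sum (\<lambda>x2 r1.
          cut_sum (\<lambda>y2 r2. \<phi> (q1 @ z1) (x2 @ y2) (r1 @ r2)) z2) q2) B) A"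
    by (intro cut_sum_cong cut_sum_swap)
  also have "\<dots> = cut_sum (\<lambda>Q1 Q2. cut_sum (\<lambda>P2 R. \<phi> Q1 P2 R) Q2) (A @ B)"
    by (simp only: cut_sum_append)
  finally show ?thesis .
qed

lemma cut_sum_coassoc:
  fixes \<phi> :: "'d forest \<Rightarrow> 'd forest \<Rightarrow> 'd forest \<Rightarrow> 'a::comm_monoid_add"
  shows "cut_sum (\<lambda>P R. cut_sum (\<lambda>P1 P2. \<phi> P1 P2 R) P) G
     = cut_sum (\<lambda>Q1 Q2. cut_sum (\<lambda>P2 R. \<phi> Q1 P2 R) Q2) G"
proof (induction G arbitrary: \<phi> rule: forest_induct)
  case (Cons d K F)
  have "cut_sum (\<lambda>P R. cut_sum (\<lambda>P1 P2. \<psi> P1 P2 R) P) [Node d K]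
      = cut_sum (\<lambda>Q1 Q2. cut_sum (\<lambda>P2 R. \<psi> Q1 P2 R) Q2) [Node d K]"
    for \<psi> :: "'d forest \<Rightarrow> 'd forest \<Rightarrow> 'd forest \<Rightarrow> 'a"
    using Cons.IH(1)[of "\<lambda>P1 P2 rs. \<psi> P1 P2 [Node d rs]"]
    by (simp add: cut_sum_single cut_sum_add add.assoc)
  from cut_sum_coassoc_append[OF this Cons.IH(2)] show ?case
    by simp
qed simp

section \<open>The coefficients of \<open>\<Psi>\<close>\<close>

text \<open>\<open>psi_coeff F G\<close> is the coefficient of \<open>G\<close> in \<open>\<Psi>(F)\<close>. The recursion is
  \<open>\<Psi>(B\<^sup>+\<^sub>d(K) F) = \<gamma>\<^sup>*\<^sub>d(\<Psi> K) \<Psi>(F)\<close>, where the product of the graded dual is dual to the cut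
  coproduct and \<open>\<gamma>\<^sup>*\<^sub>d\<close> keeps the forests ending with the leaf \<open>\<bullet>\<^sub>d\<close>.\<close>

fun psi_coeff :: "'d forest \<Rightarrow> 'd forest \<Rightarrow> nat" where
  "psi_coeff [] G = (if G = [] then 1 else 0)"
| "psi_coeff (Node d K # F) G =
     (\<Sum>(P, R)\<leftarrow>fcuts G. (if P \<noteq> [] \<and> last P = Node d [] then psi_coeff K (butlast P) else 0) * psi_coeff F R)"

definition gamma_coeff :: "'d \<Rightarrow> 'd forest \<Rightarrow> 'd forest \<Rightarrow> nat" where
  "gamma_coeff d K P = (if P \<noteq> [] \<and> last P = Node d [] then psi_coeff K (butlast P) else 0)"

lemma psi_coeff_Cons: "psi_coeff (Node d K # F) G = cut_sum (\<lambda>P R. gamma_coeff d K P * psi_coeff F R) G"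
  by (simp add: gamma_coeff_def cut_sum_def case_prod_unfold)

declare psi_coeff.simps(2) [simp del]

lemma gamma_coeff_Nil [simp]: "gamma_coeff d K [] = 0"
  by (simp add: gamma_coeff_def)

lemma gamma_coeff_snoc [simp]:
  "gamma_coeff d K (P @ [Node e L]) = (if e = d \<and> L = [] then psi_coeff K P else 0)"
  by (simp add: gamma_coeff_def)

lemma gamma_coeff_nonzero:
  assumes "gamma_coeff d K P \<noteq> 0"
  obtains P' where "P = P' @ [Node d []]" and "psi_coeff K P' \<noteq> 0"
  using assms by (cases P rule: rev_cases) (auto simp: gamma_coeff_def split: if_splits)

lemma psi_coeff_single: "psi_coeff [Node d K] G = gamma_coeff d K G"
  using cut_sum_total_cut[of "gamma_coeff d K" G]
  by (simp add: psi_coeff_Cons if_distrib[of "\<lambda>n. _ * n"] cong: if_cong)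

lemma psi_coeff_append: "psi_coeff (F1 @ F2) G = cut_sum (\<lambda>P R. psi_coeff F1 P * psi_coeff F2 R) G"
proof (induction F1 arbitrary: G rule: forest_induct)
  case Nil
  show ?case
    using cut_sum_empty_cut[of "psi_coeff F2" G] by (simp add: if_distrib[of "\<lambda>n. n * _"] cong: if_cong)
next
  case (Cons d K F1)
  have "psi_coeff ((Node d K # F1) @ F2) G
      = cut_sum (\<lambda>P R. cut_sum (\<lambda>R1 R2. gamma_coeff d K P * psi_coeff F1 R1 * psi_coeff F2 R2) R) G"
    by (simp add: psi_coeff_Cons Cons.IH(2) cut_sum_mult_left mult.assoc)
  also have "\<dots> = cut_sum (\<lambda>P R. cut_sum (\<lambda>P1 P2. gamma_coeff d K P1 * psi_coeff F1 P2 * psi_coeff F2 R) P) G"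
    by (rule cut_sum_coassoc[symmetric])
  also have "\<dots> = cut_sum (\<lambda>P R. psi_coeff (Node d K # F1) P * psi_coeff F2 R) G"
    by (simp add: psi_coeff_Cons cut_sum_mult_left mult.commute)
  finally show ?case .
qed

lemma psi_coeff_snoc:
  "psi_coeff (F @ [Node d K]) G = cut_sum (\<lambda>P R. psi_coeff F P * gamma_coeff d K R) G"
  by (simp add: psi_coeff_append psi_coeff_single)

lemma psi_coeff_Nil_right: "psi_coeff F [] = (if F = [] then 1 else 0)"
  by (induction F rule: forest_induct) (simp_all add: psi_coeff_Cons)

lemma gamma_coeff_coprod:
  assumes K: "\<And>A B. psi_coeff K (A @ B) = cut_sum (\<lambda>P R. psi_coeff P A * psi_coeff R B) K"
  shows "gamma_coeff d K (A @ B) = cut_sum (\<lambda>P R. psi_coeff P A * psi_coeff R B) [Node d K]"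
proof (cases B rule: rev_cases)
  case Nil
  then show ?thesis
    by (simp add: cut_sum_single psi_coeff_single)
next
  case (snoc B' y)
  obtain e L where y: "y = Node e L"
    by (cases y)
  have "gamma_coeff d K (A @ B) = gamma_coeff d K ((A @ B') @ [Node e L])"
    by (simp add: snoc y)
  also have "\<dots> = (if e = d \<and> L = [] then psi_coeff K (A @ B') else 0)"
    by (rule gamma_coeff_snoc)
  also have "\<dots> = cut_sum (\<lambda>P R. psi_coeff P A * psi_coeff R B) [Node d K]"
    by (cases "e = d"; cases "L = []") (simp_all add: snoc y cut_sum_single psi_coeff_single K)
  finally show ?thesis .
qed

lemma psi_coeff_coprod: "psi_coeff F (A @ B) = cut_sum (\<lambda>P R. psi_coeff P A * psi_coeff R B) F"
proof (induction F arbitrary: A B rule: forest_induct)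
  case (Cons d K F)
  let ?t = "[Node d K]"
  have tree: "psi_coeff ?t (A' @ B') = cut_sum (\<lambda>P R. psi_coeff P A' * psi_coeff R B') ?t" for A' B'
    using gamma_coeff_coprod[OF Cons.IH(1)] by (simp add: psi_coeff_single)
  have "psi_coeff (?t @ F) (A @ B)
      = cut_sum (\<lambda>a1 a2. cut_sum (\<lambda>b1 b2. psi_coeff ?t (a1 @ b1) * psi_coeff F (a2 @ b2)) B) A"
    by (simp only: psi_coeff_append cut_sum_append)
  also have "\<dots> = cut_sum (\<lambda>a1 a2. cut_sum (\<lambda>b1 b2. cut_sum (\<lambda>P1 R1. cut_sum (\<lambda>P2 R2.
      psi_coeff P1 a1 * psi_coeff R1 b1 * (psi_coeff P2 a2 * psi_coeff R2 b2)) F) ?t) B) A"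
    by (simp only: tree Cons.IH(2) cut_sum_mult)
  also have "\<dots> = cut_sum (\<lambda>P1 R1. cut_sum (\<lambda>P2 R2. cut_sum (\<lambda>a1 a2. cut_sum (\<lambda>b1 b2.
      psi_coeff P1 a1 * psi_coeff P2 a2 * (psi_coeff R1 b1 * psi_coeff R2 b2)) B) A) F) ?t"
    by (subst cut_sum_swap4) (simp only: mult_ac)
  also have "\<dots> = cut_sum (\<lambda>P1 R1. cut_sum (\<lambda>P2 R2.
      psi_coeff (P1 @ P2) A * psi_coeff (R1 @ R2) B) F) ?t"
    by (simp only: psi_coeff_append cut_sum_mult)
  also have "\<dots> = cut_sum (\<lambda>P R. psi_coeff P A * psi_coeff R B) (?t @ F)"
    by (simp only: cut_sum_append)
  finally show ?case
    by simp
qed simp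

lemma psi_coeff_weight_decs:
  "psi_coeff F G \<noteq> 0 \<Longrightarrow> fweight G = fweight F \<and> forest_decs G \<subseteq> forest_decs F"
proof (induction F arbitrary: G rule: forest_induct)
  case (Cons d K F)
  from Cons.prems obtain P R where cut: "(P, R) \<in> set (fcuts G)"
    and "gamma_coeff d K P * psi_coeff F R \<noteq> 0"
    unfolding psi_coeff_Cons by (rule cut_sum_nonzero_obtain)
  then have "gamma_coeff d K P \<noteq> 0" "psi_coeff F R \<noteq> 0"
    by auto
  obtain P' where P: "P = P' @ [Node d []]" and "psi_coeff K P' \<noteq> 0"
    using \<open>gamma_coeff d K P \<noteq> 0\<close> by (rule gamma_coeff_nonzero)
  from Cons.IH(1)[OF this(2)] have "fweight P' = fweight K \<and> forest_decs P' \<subseteq> forest_decs K" .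
  moreover have "fweight R = fweight F \<and> forest_decs R \<subseteq> forest_decs F"
    using Cons.IH(2) \<open>psi_coeff F R \<noteq> 0\<close> .
  ultimately show ?case
    using fcuts_weight_decs[OF cut] by (auto simp: P)
qed (simp split: if_splits)

section \<open>Triangularity\<close>

function leading_forest :: "'d forest \<Rightarrow> 'd forest" where
  "leading_forest F =
     (if F = [] then [] else case last F of Node d K \<Rightarrow> leading_forest K @ [Node d (leading_forest (butlast F))])"
  by pat_completeness auto
termination
proof (relation "measure fweight")
  fix F :: "'d forest" and d K
  assume "F \<noteq> []" "last F = Node d K"
  then have "fweight F = fweight (butlast F @ [Node d K])"
    by (metis append_butlast_last_id)
  then have "fweight F = fweight (butlast F) + Suc (fweight K)"
    by simp
  then show "(K, F) \<in> measure fweight" "(butlast F, F) \<in> measure fweight"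
    by auto
qed simp

declare leading_forest.simps [simp del]

lemma leading_forest_Nil [simp]: "leading_forest [] = []"
  by (simp add: leading_forest.simps)

lemma leading_forest_snoc [simp]:
  "leading_forest (F @ [Node d K]) = leading_forest K @ [Node d (leading_forest F)]"
  by (simp add: leading_forest.simps)

lemma leading_forest_props:
  "leading_forest (leading_forest F) = F \<and> fweight (leading_forest F) = fweight F
     \<and> forest_decs (leading_forest F) = forest_decs F"
  by (induction F rule: forest_rev_induct) (simp_all add: Un_ac)

lemma leading_forest_leading_forest [simp]: "leading_forest (leading_forest F) = F"
  and fweight_leading_forest [simp]: "fweight (leading_forest F) = fweight F"
  and forest_decs_leading_forest [simp]: "forest_decs (leading_forest F) = forest_decs F"
  using leading_forest_props[of F] by simp_all

text \<open>Forests are compared from their right ends: first the children of the last trees,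
  recursively, then the forests preceding the last trees. Decorations are ignored.\<close>

function rev_forest_less :: "'d forest \<Rightarrow> 'd forest \<Rightarrow> bool" where
  "rev_forest_less [] G \<longleftrightarrow> G \<noteq> []"
| "rev_forest_less (t # F) [] \<longleftrightarrow> False"
| "rev_forest_less (Node d K # F) (Node e L # G) \<longleftrightarrow>
     rev_forest_less (rev K) (rev L) \<or> (K = L \<and> rev_forest_less F G)"
  by pat_completeness auto
termination
  by (relation "measure (\<lambda>(F, G). fweight F)") (auto simp: fweight_def simp flip: rev_map)

lemma rev_forest_less_irrefl: "\<not> rev_forest_less F F"
proof -
  have "F = G \<Longrightarrow> \<not> rev_forest_less F G" for G
    by (induction F G rule: rev_forest_less.induct) auto
  then show ?thesis
    by blast
qed

lemma rev_forest_less_trans: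
  "rev_forest_less F G \<Longrightarrow> rev_forest_less G H \<Longrightarrow> rev_forest_less F H"
proof (induction F G arbitrary: H rule: rev_forest_less.induct)
  case (3 d K F e L G)
  from 3(4) obtain t H' where "H = t # H'"
    by (cases H) auto
  moreover obtain f M where "t = Node f M"
    by (cases t)
  ultimately show ?case
    using 3 by auto
qed (auto elim: rev_forest_less.elims)

lemma rev_forest_less_append: "G \<noteq> [] \<Longrightarrow> rev_forest_less F (F @ G)"
proof (induction F)
  case (Cons t F)
  then show ?case
    by (cases t) (simp add: rev_forest_less_irrefl)
qed simp

lemma rev_forest_less_children: "rev_forest_less (rev K) (Node d K # G)"
  by (induction K arbitrary: d G rule: forest_rev_induct) simp_all

definition forest_less :: "'d forest \<Rightarrow> 'd forest \<Rightarrow> bool" where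
  "forest_less F G \<longleftrightarrow> rev_forest_less (rev F) (rev G)"

abbreviation forest_le :: "'d forest \<Rightarrow> 'd forest \<Rightarrow> bool" where
  "forest_le F G \<equiv> F = G \<or> forest_less F G"

lemma forest_less_irrefl: "\<not> forest_less F F"
  by (simp add: forest_less_def rev_forest_less_irrefl)

lemma forest_less_trans: "forest_less F G \<Longrightarrow> forest_less G H \<Longrightarrow> forest_less F H"
  unfolding forest_less_def by (rule rev_forest_less_trans)

lemma forest_less_suffix: "P \<noteq> [] \<Longrightarrow> forest_less F (P @ F)"
  by (simp add: forest_less_def rev_forest_less_append)

lemma forest_less_children: "forest_less K (P @ [Node d K])"
  by (simp add: forest_less_def rev_forest_less_children)

lemma forest_less_snoc_children:
  "forest_less K L \<Longrightarrow> forest_less (F @ [Node d K]) (G @ [Node e L])"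
  by (simp add: forest_less_def)

lemma forest_less_snoc_butlast:
  "forest_less F G \<Longrightarrow> forest_less (F @ [Node d K]) (G @ [Node e K])"
  by (simp add: forest_less_def)

lemma mem_fcuts_snoc:
  assumes "(P, R) \<in> set (fcuts (G @ [Node e Z]))"
  obtains (cut_last) P0 where "(P0, R) \<in> set (fcuts G)" and "P = P0 @ [Node e Z]"
  | (keep_last) P0 R0 Pz Rz where "(P0, R0) \<in> set (fcuts G)" and "(Pz, Rz) \<in> set (fcuts Z)"
      and "P = P0 @ Pz" and "R = R0 @ [Node e Rz]"
  using assms by (auto simp: fcuts_append mem_cut_prod fcuts_single)

lemma forest_le_of_leaf_cut:
  assumes cut: "(P, R @ [Node d []]) \<in> set (fcuts G)"
    and P: "forest_le P X" and R: "forest_le R Y"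
  shows "forest_le G (Y @ [Node d X])"
proof -
  have "G \<noteq> []"
    using cut by auto
  then obtain G0 e Z where G: "G = G0 @ [Node e Z]"
    by (metis rev_exhaust ptree.exhaust)
  have below: "forest_le G (Y @ [Node d X])" if "forest_less Z P"
  proof -
    have "forest_less Z X"
      using P that by (auto intro: forest_less_trans)
    then show ?thesis
      by (simp add: G forest_less_snoc_children)
  qed
  from cut[unfolded G] show ?thesis
  proof (cases rule: mem_fcuts_snoc)
    case (cut_last P0)
    then show ?thesis
      by (simp add: below forest_less_children)
  next
    case (keep_last P0 R0 Pz Rz)
    then have "R0 = R" "e = d" "Rz = []"
      by auto
    with keep_last(2) have "Pz = Z"
      by (simp add: total_cut_iff)
    show ?thesis
    proof (cases "P0 = []")
      case True
      with keep_last(1) \<open>R0 = R\<close> have "G0 = R"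
        by (simp add: empty_cut_iff)
      then show ?thesis
        using P R True keep_last(3) \<open>Pz = Z\<close> \<open>e = d\<close>
        by (auto simp: G forest_less_snoc_children forest_less_snoc_butlast)
    next
      case False
      then show ?thesis
        by (simp add: below keep_last(3) \<open>Pz = Z\<close> forest_less_suffix)
    qed
  qed
qed

lemma psi_coeff_nonzero_le_leading:
  "psi_coeff F G \<noteq> 0 \<Longrightarrow> forest_le G (leading_forest F)"
proof (induction F arbitrary: G rule: forest_rev_induct)
  case (snoc F d K)
  from snoc.prems obtain P R where cut: "(P, R) \<in> set (fcuts G)"
    and "psi_coeff F P * gamma_coeff d K R \<noteq> 0"
    unfolding psi_coeff_snoc by (rule cut_sum_nonzero_obtain)
  then have "psi_coeff F P \<noteq> 0" and "gamma_coeff d K R \<noteq> 0"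
    by auto
  from this(2) obtain R' where R: "R = R' @ [Node d []]" and "psi_coeff K R' \<noteq> 0"
    by (rule gamma_coeff_nonzero)
  show ?case
    using forest_le_of_leaf_cut[OF cut[unfolded R] snoc.IH(1) snoc.IH(2)] \<open>psi_coeff F P \<noteq> 0\<close>
      \<open>psi_coeff K R' \<noteq> 0\<close> by simp
qed (simp split: if_splits)

lemma psi_coeff_leading_nonzero: "psi_coeff F (leading_forest F) \<noteq> 0"
proof (induction F rule: forest_rev_induct)
  case (snoc F d K)
  then show ?case
    unfolding psi_coeff_snoc leading_forest_snoc
    by (intro cut_sum_nonzero_intro[OF leaf_cut_mem]) simp
qed simp

section \<open>The Hopf algebra morphism \<open>\<Psi>\<close>\<close>

definition Psi :: "'d hvec \<Rightarrow> 'd hvec" where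
  "Psi = lin_ext (\<lambda>F G. of_nat (psi_coeff F G))"

lemma Hc_finite_support: "x \<in> Hc D \<Longrightarrow> finite {F. x F \<noteq> 0}"
  by (simp add: Hc_def)

lemma basis_in_Hc: "forest_on D F \<Longrightarrow> basis F \<in> Hc D"
  by (simp add: Hc_def basis_def)

lemma Hc_lincomb:
  "finite I \<Longrightarrow> (\<And>i. i \<in> I \<Longrightarrow> y i \<in> Hc D) \<Longrightarrow> (\<lambda>F. \<Sum>i\<in>I. c i * y i F) \<in> Hc D"
  using support_lincomb_subset[of c y I] by (auto simp: Hc_def intro: finite_support_lincomb)

lemma Hc_scale: "x \<in> Hc D \<Longrightarrow> (\<lambda>F. c * x F) \<in> Hc D"
  using Hc_lincomb[of "{()}" "\<lambda>_. x" D "\<lambda>_. c"] by simp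

lemma Hc_eq_lincomb_basis: "x \<in> Hc D \<Longrightarrow> x = (\<lambda>H. \<Sum>F | x F \<noteq> 0. x F * basis F H)"
  by (auto simp: basis_def lincomb_delta Hc_finite_support)

lemma Psi_basis: "Psi (basis F) = (\<lambda>G. of_nat (psi_coeff F G))"
  unfolding Psi_def basis_def by (rule lin_ext_delta)

lemma Psi_add: "x \<in> Hc D \<Longrightarrow> y \<in> Hc D \<Longrightarrow> Psi (\<lambda>F. x F + y F) = (\<lambda>F. Psi x F + Psi y F)"
  unfolding Psi_def by (simp add: lin_ext_add Hc_finite_support)

lemma Psi_scale: "x \<in> Hc D \<Longrightarrow> Psi (\<lambda>F. c * x F) = (\<lambda>F. c * Psi x F)"
  unfolding Psi_def by (simp add: lin_ext_scale Hc_finite_support)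

lemma Psi_nonzero:
  assumes "Psi x G \<noteq> 0"
  obtains F where "x F \<noteq> 0" and "fweight G = fweight F" and "forest_decs G \<subseteq> forest_decs F"
proof -
  obtain F where "x F \<noteq> 0" and "(of_nat (psi_coeff F G) :: rat) \<noteq> 0"
    using assms unfolding Psi_def by (rule lin_ext_nonzero)
  then show thesis
    using that psi_coeff_weight_decs[of F G] by simp
qed

lemma Psi_in_Dc: "x \<in> Hc D \<Longrightarrow> Psi x \<in> Dc D"
proof -
  assume x: "x \<in> Hc D"
  let ?N = "Max (fweight ` {F. x F \<noteq> 0})"
  have "forest_on D G \<and> fweight G \<le> ?N" if "Psi x G \<noteq> 0" for G
  proof -
    obtain F where "x F \<noteq> 0" "fweight G = fweight F" "forest_decs G \<subseteq> forest_decs F"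
      using \<open>Psi x G \<noteq> 0\<close> by (rule Psi_nonzero)
    then show ?thesis
      using x by (auto simp: Hc_def forest_on_iff_decs)
  qed
  then show ?thesis
    unfolding Dc_def by blast
qed

lemma Psi_graded: "graded_map D Psi"
  unfolding graded_map_def by (blast elim: Psi_nonzero)

lemma Psi_unit: "Psi hunit = dunit"
  unfolding hunit_def dunit_def Psi_basis by (simp add: basis_def fun_eq_iff)

lemma Psi_counit: "x \<in> Hc D \<Longrightarrow> dcounit (Psi x) = hcounit x"
proof -
  assume x: "x \<in> Hc D"
  let ?S = "insert [] {F. x F \<noteq> 0}"
  have "Psi x [] = (\<Sum>F\<in>?S. x F * of_nat (psi_coeff F []))"
    unfolding Psi_def by (rule lin_ext_eq_sum) (auto simp: Hc_finite_support[OF x])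
  also have "\<dots> = (\<Sum>F\<in>?S. if F = [] then x F else 0)"
    by (intro sum.cong) (simp_all add: psi_coeff_Nil_right)
  also have "\<dots> = x []"
    using Hc_finite_support[OF x] by simp
  finally show ?thesis
    by (simp add: dcounit_def hcounit_def)
qed

lemma splits_eq_image_take_drop:
  "{p. fst p @ snd p = H} = (\<lambda>i. (take i H, drop i H)) ` {..length H}"
proof
  show "{p. fst p @ snd p = H} \<subseteq> (\<lambda>i. (take i H, drop i H)) ` {..length H}"
  proof
    fix p :: "'a list \<times> 'a list"
    assume "p \<in> {p. fst p @ snd p = H}"
    then have "p = (take (length (fst p)) H, drop (length (fst p)) H)" and "length (fst p) \<le> length H"
      by auto
    then show "p \<in> (\<lambda>i. (take i H, drop i H)) ` {..length H}"
      by blast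
  qed
qed auto

lemma hmult_eq_lincomb:
  fixes x y :: "'d hvec"
  assumes x: "finite {A. x A \<noteq> 0}" and y: "finite {B. y B \<noteq> 0}"
  shows "hmult x y = (\<lambda>H. \<Sum>p\<in>{A. x A \<noteq> 0} \<times> {B. y B \<noteq> 0}. x (fst p) * y (snd p) * basis (fst p @ snd p) H)"
proof
  fix H :: "'d forest"
  let ?S = "{A. x A \<noteq> 0} \<times> {B. y B \<noteq> 0}" and ?splits = "{p. fst p @ snd p = H}"
  have inj: "inj_on (\<lambda>i. (take i H, drop i H)) {..length H}"
    by (rule inj_onI) (metis atMost_iff length_take min.absorb2 prod.inject)
  have "hmult x y H = (\<Sum>p\<in>?splits. x (fst p) * y (snd p))"
    by (simp add: hmult_def splits_eq_image_take_drop sum.reindex[OF inj])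
  also have "\<dots> = (\<Sum>p\<in>?S \<inter> ?splits. x (fst p) * y (snd p))"
    by (rule sum.mono_neutral_right) (auto simp: splits_eq_image_take_drop)
  also have "\<dots> = (\<Sum>p\<in>?S. if fst p @ snd p = H then x (fst p) * y (snd p) else 0)"
    using x y by (simp add: Int_def sum.inter_filter)
  also have "\<dots> = (\<Sum>p\<in>?S. x (fst p) * y (snd p) * basis (fst p @ snd p) H)"
    by (intro sum.cong refl) (auto simp: basis_def)
  finally show "hmult x y H = (\<Sum>p\<in>?S. x (fst p) * y (snd p) * basis (fst p @ snd p) H)" .
qed

lemma dmult_eq_cut_sum: "dmult f g G = cut_sum (\<lambda>P R. f P * g R) G"
  by (simp add: dmult_def cut_sum_def case_prod_unfold)

lemma of_nat_cut_sum: "of_nat (cut_sum f G) = cut_sum (\<lambda>P R. of_nat (f P R)) G"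
  unfolding cut_sum_def sum_list_of_nat[symmetric] by (simp add: o_def)

lemma Psi_mult:
  assumes x: "x \<in> Hc D" and y: "y \<in> Hc D"
  shows "Psi (hmult x y) = dmult (Psi x) (Psi y)"
proof
  fix G
  let ?S = "{A. x A \<noteq> 0} \<times> {B. y B \<noteq> 0}"
  have fin: "finite {A. x A \<noteq> 0}" "finite {B. y B \<noteq> 0}"
    using x y by (simp_all add: Hc_finite_support)
  have "Psi (hmult x y) G = (\<Sum>p\<in>?S. x (fst p) * y (snd p) * of_nat (psi_coeff (fst p @ snd p) G))"
    unfolding hmult_eq_lincomb[OF fin] Psi_def
    by (subst lin_ext_lincomb) (simp_all add: fin basis_def lin_ext_delta)
  also have "\<dots> = cut_sum (\<lambda>P R. \<Sum>p\<in>?S. x (fst p) * of_nat (psi_coeff (fst p) P) * (y (snd p) * of_nat (psi_coeff (snd p) R))) G"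
    by (simp add: psi_coeff_append of_nat_cut_sum cut_sum_mult_left cut_sum_sum mult_ac)
  also have "\<dots> = cut_sum (\<lambda>P R. Psi x P * Psi y R) G"
    by (simp add: Psi_def lin_ext_def sum_product sum.cartesian_product case_prod_unfold)
  finally show "Psi (hmult x y) G = dmult (Psi x) (Psi y) G"
    by (simp add: dmult_eq_cut_sum)
qed

lemma hcoprod_eq_lin_ext: "hcoprod x = lin_ext (\<lambda>F c. of_nat (count_list (fcuts F) c)) x"
  by (auto simp: fun_eq_iff hcoprod_def lin_ext_def)

lemma tensmap_Psi_eq_lin_ext:
  "tensmap Psi z = lin_ext (\<lambda>c c'. of_nat (psi_coeff (fst c) (fst c') * psi_coeff (snd c) (snd c'))) z"
  by (auto simp: fun_eq_iff tensmap_def lin_ext_def Psi_basis case_prod_unfold mult.assoc)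

lemma Psi_coprod:
  fixes x :: "'d hvec"
  assumes x: "x \<in> Hc D"
  shows "dcoprod (Psi x) = tensmap Psi (hcoprod x)"
proof -
  have rows: "(\<lambda>F c. \<Sum>c' | (of_nat (count_list (fcuts F) c') :: rat) \<noteq> 0.
        of_nat (count_list (fcuts F) c') * of_nat (psi_coeff (fst c') (fst c) * psi_coeff (snd c') (snd c)))
      = (\<lambda>F c. of_nat (psi_coeff F (fst c @ snd c)))"
    by (intro ext) (simp add: psi_coeff_coprod cut_sum_def sum_list_map_eq_sum_count count_list_0_iff
        flip: of_nat_mult of_nat_sum)
  have "tensmap Psi (hcoprod x) = lin_ext (\<lambda>F c. of_nat (psi_coeff F (fst c @ snd c))) x"
    unfolding tensmap_Psi_eq_lin_ext hcoprod_eq_lin_ext rows[symmetric]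
    by (rule lin_ext_comp) (simp_all add: Hc_finite_support[OF x] count_list_0_iff)
  then show ?thesis
    by (auto simp: fun_eq_iff dcoprod_def Psi_def lin_ext_def)
qed

lemma Bplus_support: "{H. Bplus d x H \<noteq> 0} \<subseteq> (\<lambda>K. [Node d K]) ` {K. x K \<noteq> 0}"
proof
  fix H
  assume "H \<in> {H. Bplus d x H \<noteq> 0}"
  then show "H \<in> (\<lambda>K. [Node d K]) ` {K. x K \<noteq> 0}"
    by (auto simp: Bplus_def split: list.splits ptree.splits if_splits)
qed

lemma Psi_Bplus:
  fixes x :: "'d hvec"
  assumes x: "x \<in> Hc D"
  shows "Psi (Bplus d x) = gamma_dual d (Psi x)"
proof
  fix G
  let ?S = "{K. x K \<noteq> 0}"
  have "Psi (Bplus d x) G = (\<Sum>H\<in>(\<lambda>K. [Node d K]) ` ?S. Bplus d x H * of_nat (psi_coeff H G))"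
    unfolding Psi_def
    by (rule lin_ext_eq_sum) (simp_all add: Hc_finite_support[OF x] Bplus_support)
  also have "\<dots> = (\<Sum>K\<in>?S. x K * of_nat (gamma_coeff d K G))"
    by (subst sum.reindex) (auto simp: inj_on_def Bplus_def psi_coeff_single)
  also have "\<dots> = gamma_dual d (Psi x) G"
    by (simp add: gamma_dual_def gamma_coeff_def Psi_def lin_ext_def)
  finally show "Psi (Bplus d x) G = gamma_dual d (Psi x) G" .
qed

lemma Psi_hopf_morph: "hopf_morph D Psi"
  unfolding hopf_morph_def
  by (auto intro: Psi_in_Dc Psi_add Psi_scale Psi_mult Psi_unit Psi_coprod Psi_counit)

lemma Psi_intertwines: "intertwines D Psi"
  unfolding intertwines_def by (auto intro: Psi_Bplus)

section \<open>Bijectivity\<close>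

interpretation psi: triangular_kernel "\<lambda>F G. of_nat (psi_coeff F G) :: rat" leading_forest forest_less
proof
  show "inj leading_forest"
    by (metis injI leading_forest_leading_forest)
qed (auto simp: forest_less_irrefl psi_coeff_leading_nonzero psi_coeff_nonzero_le_leading
  intro: forest_less_trans)

lemma Psi_bij: "finite D \<Longrightarrow> bij_betw Psi (Hc D) (Dc D)"
proof (rule bij_betw_imageI)
  show "inj_on Psi (Hc D)"
    unfolding Psi_def by (rule inj_on_subset[OF psi.inj_on_lin_ext]) (auto simp: Hc_finite_support)
  assume D: "finite D"
  show "Psi ` Hc D = Dc D"
  proof
    show "Psi ` Hc D \<subseteq> Dc D"
      using Psi_in_Dc by blast
  next
    show "Dc D \<subseteq> Psi ` Hc D"
    proof
      fix f
      assume "f \<in> Dc D"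
      then obtain N where N: "{G. f G \<noteq> 0} \<subseteq> {G. forest_on D G \<and> fweight G \<le> N}"
        by (auto simp: Dc_def)
      let ?W = "{G. forest_on D G \<and> fweight G \<le> N}"
      have "\<exists>x. finite {F. x F \<noteq> 0} \<and> {F. x F \<noteq> 0} \<subseteq> ?W \<and> Psi x = f"
        unfolding Psi_def
      proof (rule psi.lin_ext_onto[OF finite_bounded_forests[OF D] _ _ N])
        show "\<exists>F\<in>?W. leading_forest F = G" if "G \<in> ?W" for G
          using that by (intro bexI[of _ "leading_forest G"]) (simp_all add: forest_on_iff_decs)
        show "G \<in> ?W" if "F \<in> ?W" "(of_nat (psi_coeff F G) :: rat) \<noteq> 0" for F G
          using that psi_coeff_weight_decs[of F G] by (auto simp: forest_on_iff_decs)
      qed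
      then show "f \<in> Psi ` Hc D"
        by (auto simp: Hc_def)
    qed
  qed
qed

lemma Psi_graded_hopf_iso: "finite D \<Longrightarrow> graded_hopf_iso D Psi"
  by (simp add: graded_hopf_iso_def Psi_hopf_morph Psi_graded Psi_bij)

section \<open>Uniqueness\<close>

lemma support_basis: "{G. basis F G \<noteq> 0} = {F}"
  by (auto simp: basis_def)

lemma hmult_basis: "hmult (basis A) (basis B) = basis (A @ B)"
  by (simp add: hmult_eq_lincomb support_basis basis_def)

lemma Bplus_basis: "Bplus d (basis K) = basis [Node d K]"
  by (auto simp: fun_eq_iff Bplus_def basis_def split: list.splits ptree.splits)

lemma hopf_morph_add:
  "hopf_morph D \<Psi> \<Longrightarrow> x \<in> Hc D \<Longrightarrow> y \<in> Hc D \<Longrightarrow> \<Psi> (\<lambda>F. x F + y F) = (\<lambda>F. \<Psi> x F + \<Psi> y F)"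
  by (simp add: hopf_morph_def)

lemma hopf_morph_scale: "hopf_morph D \<Psi> \<Longrightarrow> x \<in> Hc D \<Longrightarrow> \<Psi> (\<lambda>F. c * x F) = (\<lambda>F. c * \<Psi> x F)"
  by (simp add: hopf_morph_def)

lemma hopf_morph_lincomb:
  assumes \<Psi>: "hopf_morph D \<Psi>" and S: "finite S" "\<forall>F\<in>S. forest_on D F"
  shows "\<Psi> (\<lambda>H. \<Sum>F\<in>S. c F * basis F H) = (\<lambda>G. \<Sum>F\<in>S. c F * \<Psi> (basis F) G)"
  using S
proof (induction S rule: finite_induct)
  case empty
  have "basis [] \<in> Hc D"
    by (simp add: basis_in_Hc forest_on_def)
  from hopf_morph_scale[OF \<Psi> this, of 0] show ?case
    by simp
next
  case (insert a S)
  have a: "basis a \<in> Hc D" and "(\<lambda>H. c a * basis a H) \<in> Hc D"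
    and "(\<lambda>H. \<Sum>F\<in>S. c F * basis F H) \<in> Hc D"
    using insert by (auto intro!: basis_in_Hc Hc_scale Hc_lincomb)
  from hopf_morph_add[OF \<Psi> this(2,3)] show ?case
    using insert hopf_morph_scale[OF \<Psi> a] by simp
qed

lemma hopf_morph_basis_eq_Psi:
  assumes \<Psi>: "hopf_morph D \<Psi>" and intertw: "intertwines D \<Psi>"
  shows "forest_on D F \<Longrightarrow> \<Psi> (basis F) = Psi (basis F)"
proof (induction F rule: forest_induct)
  case Nil
  then show ?case
    using \<Psi> by (simp add: hopf_morph_def Psi_unit flip: hunit_def)
next
  case (Cons d K F)
  then have "d \<in> D" and K: "basis K \<in> Hc D" and F: "basis F \<in> Hc D"
    by (simp_all add: forest_on_iff_decs basis_in_Hc)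
  have B: "Bplus d (basis K) \<in> Hc D"
    using Cons.prems by (simp add: Bplus_basis basis_in_Hc forest_on_iff_decs)
  have split: "basis (Node d K # F) = hmult (Bplus d (basis K)) (basis F)"
    by (simp add: Bplus_basis hmult_basis)
  have "\<Psi> (basis (Node d K # F)) = dmult (gamma_dual d (\<Psi> (basis K))) (\<Psi> (basis F))"
    using \<Psi> intertw \<open>d \<in> D\<close> K F B by (simp add: split hopf_morph_def intertwines_def)
  also have "\<dots> = dmult (gamma_dual d (Psi (basis K))) (Psi (basis F))"
    using Cons by (simp add: forest_on_iff_decs)
  also have "\<dots> = Psi (basis (Node d K # F))"
    by (simp add: split Psi_mult[OF B F] Psi_Bplus[OF K])
  finally show ?case .
qed

lemma hopf_morph_eq_Psi:
  assumes "hopf_morph D \<Psi>" and "intertwines D \<Psi>" and x: "x \<in> Hc D"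
  shows "\<Psi> x = Psi x"
proof -
  let ?S = "{F. x F \<noteq> 0}"
  have S: "finite ?S" "\<forall>F\<in>?S. forest_on D F"
    using x by (auto simp: Hc_def)
  have "\<Psi> (\<lambda>H. \<Sum>F\<in>?S. x F * basis F H) = (\<lambda>G. \<Sum>F\<in>?S. x F * \<Psi> (basis F) G)"
    by (rule hopf_morph_lincomb[OF assms(1) S])
  also have "\<dots> = (\<lambda>G. \<Sum>F\<in>?S. x F * Psi (basis F) G)"
    using S(2) by (intro ext sum.cong refl) (simp add: hopf_morph_basis_eq_Psi[OF assms(1,2)])
  also have "\<dots> = Psi (\<lambda>H. \<Sum>F\<in>?S. x F * basis F H)"
    by (rule hopf_morph_lincomb[OF Psi_hopf_morph S, symmetric])
  finally have "\<Psi> (\<lambda>H. \<Sum>F\<in>?S. x F * basis F H) = Psi (\<lambda>H. \<Sum>F\<in>?S. x F * basis F H)" .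
  then show ?thesis
    by (simp flip: Hc_eq_lincomb_basis[OF x])
qed

lemma graded_hopf_iso_cong:
  assumes iso: "graded_hopf_iso D \<Phi>" and "hopf_morph D \<Psi>" and eq: "\<And>x. x \<in> Hc D \<Longrightarrow> \<Psi> x = \<Phi> x"
  shows "graded_hopf_iso D \<Psi>"
proof -
  have "graded_map D \<Psi>"
    unfolding graded_map_def
  proof (intro allI ballI impI)
    fix n x F
    assume x: "x \<in> Hc D" and hom: "\<forall>F. x F \<noteq> 0 \<longrightarrow> fweight F = n" and "\<Psi> x F \<noteq> 0"
    then have "\<Phi> x F \<noteq> 0"
      by (simp add: eq)
    moreover have "graded_map D \<Phi>"
      using iso by (simp add: graded_hopf_iso_def)
    ultimately show "fweight F = n"
      using x hom unfolding graded_map_def by blast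
  qed
  moreover have "bij_betw \<Psi> (Hc D) (Dc D) = bij_betw \<Phi> (Hc D) (Dc D)"
    by (rule bij_betw_cong) (rule eq)
  ultimately show ?thesis
    using iso \<open>hopf_morph D \<Psi>\<close> by (simp add: graded_hopf_iso_def)
qed

theorem mainTheorem3:
  fixes D :: "'d set"
  assumes "finite D" and "D \<noteq> {}"
  shows "(\<exists>\<Psi>. hopf_morph D \<Psi> \<and> intertwines D \<Psi>)
       \<and> (\<forall>\<Psi>1 \<Psi>2. hopf_morph D \<Psi>1 \<and> intertwines D \<Psi>1 \<and> hopf_morph D \<Psi>2 \<and> intertwines D \<Psi>2
                  \<longrightarrow> (\<forall>x\<in>Hc D. \<Psi>1 x = \<Psi>2 x))
       \<and> (\<forall>\<Psi>. hopf_morph D \<Psi> \<and> intertwines D \<Psi> \<longrightarrow> graded_hopf_iso D \<Psi>)"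
proof (intro conjI allI impI)
  show "\<exists>\<Psi>. hopf_morph D \<Psi> \<and> intertwines D \<Psi>"
    using Psi_hopf_morph Psi_intertwines by blast
next
  fix \<Psi>1 \<Psi>2
  assume "hopf_morph D \<Psi>1 \<and> intertwines D \<Psi>1 \<and> hopf_morph D \<Psi>2 \<and> intertwines D \<Psi>2"
  then show "\<forall>x\<in>Hc D. \<Psi>1 x = \<Psi>2 x"
    by (simp add: hopf_morph_eq_Psi[of D \<Psi>1] hopf_morph_eq_Psi[of D \<Psi>2])
next
  fix \<Psi>
  assume "hopf_morph D \<Psi> \<and> intertwines D \<Psi>"
  then show "graded_hopf_iso D \<Psi>"
    by (intro graded_hopf_iso_cong[OF Psi_graded_hopf_iso[OF \<open>finite D\<close>]]) (simp_all add: hopf_morph_eq_Psi[of D \<Psi>])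
qed

end
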